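(* Let $\mathcal{X}$ be a Banach space and $J:\mathcal{X}\to\mathbb{R}\cup\{\infty\}$ a convex, absolutely one-homogeneous functional. Let $v\in\mathcal{X}$ and $p\in\partial J(v)$. Then the set $$\mathcal{M}^{\mathrm{IC}}=\{u\in\mathcal{X}\ :\ [D_J^p(\cdot,v)\,\Box\, D_J^{-p}(\cdot,-v)](u)=0\}$$ is a nonempty linear subspace of $\mathcal{X}$.
   Context: Absolutely one-homogeneous: $J(\lambda u)=|\lambda|J(u)$ for all $\lambda\in\mathbb{R}$. Bregman distance: $D_J^{q}(u,w)=J(u)-J(w)-\langle q,u-w\rangle$ for $q\in\partial J(w)$ (note $-p\in\partial J(-v)$). The infimal convolution of $F,G:\mathcal{X}\to\mathbb{R}\cup\{\infty\}$ is $(F\Box G)(u)=\inf_{z\in\mathcal{X}}F(u-z)+G(z)$. *)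

theory Defs
  imports "HOL-Analysis.Analysis"
begin

text \<open>Functionals J : X -> R \<union> {\<infinity>} are modelled as maps into ereal that never take
  the value minus infinity.  The dual space X* is modelled by bounded linear functionals
  X \<Rightarrow>L real, with pairing blinfun_apply.\<close>

definition proper_ext :: "('a \<Rightarrow> ereal) \<Rightarrow> bool" where
  "proper_ext J \<longleftrightarrow> (\<forall>u. J u \<noteq> -\<infinity>)"

definition convex_ext :: "('a::real_vector \<Rightarrow> ereal) \<Rightarrow> bool" where
  "convex_ext J \<longleftrightarrow> (\<forall>u w (t::real). 0 \<le> t \<and> t \<le> 1 \<longrightarrow>
      J (t *\<^sub>R u + (1 - t) *\<^sub>R w) \<le> ereal t * J u + ereal (1 - t) * J w)"

definition abs_one_homogeneous :: "('a::real_vector \<Rightarrow> ereal) \<Rightarrow> bool" where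
  "abs_one_homogeneous J \<longleftrightarrow> (\<forall>(c::real) u. J (c *\<^sub>R u) = ereal \<bar>c\<bar> * J u)"

definition subdiff :: "('a::real_normed_vector \<Rightarrow> ereal) \<Rightarrow> 'a \<Rightarrow> ('a \<Rightarrow>\<^sub>L real) set" where
  "subdiff J v = {p. J v \<noteq> \<infinity> \<and> (\<forall>u. J v + ereal (blinfun_apply p (u - v)) \<le> J u)}"

definition bregman :: "('a::real_normed_vector \<Rightarrow> ereal) \<Rightarrow> ('a \<Rightarrow>\<^sub>L real) \<Rightarrow> 'a \<Rightarrow> 'a \<Rightarrow> ereal" where
  "bregman J q u w = J u - J w - ereal (blinfun_apply q (u - w))"

definition infconv :: "('a::real_vector \<Rightarrow> ereal) \<Rightarrow> ('a \<Rightarrow> ereal) \<Rightarrow> 'a \<Rightarrow> ereal" where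
  "infconv F G u = (INF z. F (u - z) + G z)"

end

theory Submission
  imports Defs
begin

text \<open>Since \<open>J\<close> is sublinear and \<open>p \<in> \<partial>J(v)\<close> forces \<open>\<langle>p, v\<rangle> = J(v)\<close>,
  both Bregman distances are the nonnegative sublinear functionals \<open>J - p\<close> and
  \<open>J + p\<close>, which are mirror images of each other under \<open>u \<mapsto> -u\<close>.  The infimal
  convolution of nonnegative sublinear functionals is again nonnegative and sublinear,
  and here it is even, so its zero set is a cone closed under negation, i.e. a linear
  subspace containing 0.\<close>

text \<open>Homogeneity is required for \<open>c = 0\<close> too; as \<open>0 * \<infinity> = 0\<close> in \<open>ereal\<close>,
  this forces \<open>F 0 = 0\<close>.\<close>

definition sublinear_ext :: "('a::real_vector \<Rightarrow> ereal) \<Rightarrow> bool" where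
  "sublinear_ext F \<longleftrightarrow>
     (\<forall>x y. F (x + y) \<le> F x + F y) \<and> (\<forall>c x. 0 \<le> c \<longrightarrow> F (c *\<^sub>R x) = ereal c * F x)"

lemma sublinear_extD:
  assumes "sublinear_ext F"
  shows sublinear_ext_add: "F (x + y) \<le> F x + F y"
    and sublinear_ext_scaleR: "0 \<le> c \<Longrightarrow> F (c *\<^sub>R x) = ereal c * F x"
  using assms by (auto simp: sublinear_ext_def)

lemma sublinear_ext_zero: "sublinear_ext F \<Longrightarrow> F 0 = 0"
  using sublinear_ext_scaleR[of F 0 0] by (simp flip: zero_ereal_def)

lemma sublinear_ext_zero_set_subspace:
  assumes "sublinear_ext F" and nonneg: "\<And>x. 0 \<le> F x" and even: "\<And>x. F (- x) = F x"
  shows "subspace {x. F x = 0}"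
  unfolding subspace_def
proof (intro conjI ballI allI)
  show "0 \<in> {x. F x = 0}"
    using sublinear_ext_zero[OF assms(1)] by simp
next
  fix x y assume "x \<in> {x. F x = 0}" "y \<in> {x. F x = 0}"
  then show "x + y \<in> {x. F x = 0}"
    using sublinear_ext_add[OF assms(1), of x y] nonneg[of "x + y"] by simp
next
  fix c :: real and x assume x: "x \<in> {x. F x = 0}"
  have "F (\<bar>c\<bar> *\<^sub>R x) = 0"
    using sublinear_ext_scaleR[OF assms(1), of "\<bar>c\<bar>" x] x by simp
  then show "c *\<^sub>R x \<in> {x. F x = 0}"
    using even[of "\<bar>c\<bar> *\<^sub>R x"] by (cases "0 \<le> c") auto
qed

lemma infconv_nonneg:
  "(\<And>x. 0 \<le> F x) \<Longrightarrow> (\<And>x. 0 \<le> G x) \<Longrightarrow> 0 \<le> infconv F G u"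
  unfolding infconv_def by (rule INF_greatest) simp

lemma infconv_le: "infconv F G u \<le> F (u - z) + G z"
  unfolding infconv_def by (rule INF_lower) simp

lemma infconv_even:
  assumes "\<And>x. G x = F (- x)"
  shows "infconv F G (- u) = infconv F G u"
proof -
  have le: "infconv F G (- x) \<le> infconv F G x" for x
    unfolding infconv_def[of F G x]
  proof (rule INF_greatest)
    fix w
    have "infconv F G (- x) \<le> F (- x - (w - x)) + G (w - x)"
      by (rule infconv_le)
    also have "\<dots> = F (x - w) + G w"
      using assms by (simp add: add.commute)
    finally show "infconv F G (- x) \<le> F (x - w) + G w" .
  qed
  show ?thesis
    using le[of u] le[of "- u"] by simp
qed

lemma infconv_add:
  assumes "sublinear_ext F" "sublinear_ext G" "\<And>x. 0 \<le> F x" "\<And>x. 0 \<le> G x"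
  shows "infconv F G (x + y) \<le> infconv F G x + infconv F G y"
proof -
  have "infconv F G (x + y) \<le> (INF z. INF w. (F (x - z) + G z) + (F (y - w) + G w))"
  proof (intro INF_greatest)
    fix z w
    have "infconv F G (x + y) \<le> F ((x - z) + (y - w)) + G (z + w)"
      using infconv_le[of F G "x + y" "z + w"] by (simp add: algebra_simps)
    also have "\<dots> \<le> (F (x - z) + F (y - w)) + (G z + G w)"
      using assms(1,2) by (intro add_mono sublinear_ext_add)
    also have "\<dots> = (F (x - z) + G z) + (F (y - w) + G w)"
      by (simp add: ac_simps)
    finally show "infconv F G (x + y) \<le> \<dots>" .
  qed
  also have "\<dots> = (INF z. (F (x - z) + G z) + infconv F G y)"
    using assms(3,4) by (simp add: infconv_def INF_ereal_add_right add_nonneg_nonneg)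
  also have "\<dots> = infconv F G x + infconv F G y"
    using assms(3,4) infconv_nonneg[of F G y]
    by (simp add: infconv_def INF_ereal_add_left add_nonneg_nonneg)
  finally show ?thesis .
qed

lemma ereal_mult_INF:
  assumes "0 < c"
  shows "ereal c * (INF i\<in>I. f i) = (INF i\<in>I. ereal c * f i)"
proof -
  have "ereal c * (INF i\<in>I. f i) = Inf {ereal c * y |y. y \<in> f ` I}"
    using ereal_Inf_cmult[OF assms, of "\<lambda>y. y \<in> f ` I"] by simp
  also have "{ereal c * y |y. y \<in> f ` I} = (\<lambda>i. ereal c * f i) ` I"
    by auto
  finally show ?thesis .
qed

lemma infconv_scaleR:
  fixes F G :: "'a::real_vector \<Rightarrow> ereal"
  assumes "sublinear_ext F" "sublinear_ext G" "\<And>x. 0 \<le> F x" "\<And>x. 0 \<le> G x" "0 \<le> c"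
  shows "infconv F G (c *\<^sub>R x) = ereal c * infconv F G x"
proof (cases "c = 0")
  case True
  have "infconv F G 0 \<le> 0"
    using infconv_le[of F G 0 0] sublinear_ext_zero[OF assms(1)] sublinear_ext_zero[OF assms(2)]
    by simp
  then have "infconv F G 0 = 0"
    using infconv_nonneg[OF assms(3,4), where u = 0] by (rule antisym)
  with True show ?thesis
    by (simp flip: zero_ereal_def)
next
  case False
  then have c: "0 < c" using assms(5) by simp
  have scale: "F (c *\<^sub>R x - c *\<^sub>R w) + G (c *\<^sub>R w) = ereal c * (F (x - w) + G w)" for w
  proof -
    have "F (c *\<^sub>R x - c *\<^sub>R w) = ereal c * F (x - w)"
      using sublinear_ext_scaleR[OF assms(1) assms(5), of "x - w"]
      by (simp add: scaleR_diff_right)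
    moreover have "G (c *\<^sub>R w) = ereal c * G w"
      using sublinear_ext_scaleR[OF assms(2) assms(5)] .
    ultimately show ?thesis
      using assms(3,4) by (simp add: ereal_right_distrib)
  qed
  have "surj (\<lambda>w. c *\<^sub>R w :: 'a)"
    by (rule surjI[of _ "\<lambda>z. z /\<^sub>R c"]) (use c in simp)
  then have "infconv F G (c *\<^sub>R x)
      = (INF z\<in>range (\<lambda>w. c *\<^sub>R w). F (c *\<^sub>R x - z) + G z)"
    by (simp add: infconv_def)
  also have "\<dots> = (INF w. ereal c * (F (x - w) + G w))"
    by (simp add: image_comp comp_def scale)
  also have "\<dots> = ereal c * infconv F G x"
    unfolding infconv_def by (rule ereal_mult_INF[OF c, symmetric])
  finally show ?thesis .
qed

lemma sublinear_ext_infconv: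
  assumes "sublinear_ext F" "sublinear_ext G" "\<And>x. 0 \<le> F x" "\<And>x. 0 \<le> G x"
  shows "sublinear_ext (infconv F G)"
  using infconv_add[OF assms] infconv_scaleR[OF assms] by (simp add: sublinear_ext_def)

lemma abs_one_homogeneous_zero: "abs_one_homogeneous J \<Longrightarrow> J 0 = 0"
  unfolding abs_one_homogeneous_def
  by (metis abs_zero ereal_zero_mult scaleR_zero_left zero_ereal_def)

lemma abs_one_homogeneous_uminus: "abs_one_homogeneous J \<Longrightarrow> J (- u) = J u"
  unfolding abs_one_homogeneous_def
  by (metis abs_minus_cancel abs_one mult_1 scaleR_minus1_left one_ereal_def)

lemma convex_one_homogeneous_subadditive:
  assumes "proper_ext J" "convex_ext J" "abs_one_homogeneous J"
  shows "J (a + b) \<le> J a + J b"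
proof -
  have "J (a + b) = J ((1/2) *\<^sub>R (2 *\<^sub>R a) + (1 - 1/2) *\<^sub>R (2 *\<^sub>R b))"
    by (simp flip: scaleR_add_right)
  also have "\<dots> \<le> ereal (1/2) * J (2 *\<^sub>R a) + ereal (1 - 1/2) * J (2 *\<^sub>R b)"
    by (rule assms(2)[unfolded convex_ext_def, rule_format]) simp
  also have "\<dots> = J a + J b"
    using assms(1,3) unfolding proper_ext_def abs_one_homogeneous_def
    by (cases "J a"; cases "J b") auto
  finally show ?thesis .
qed

lemma sublinear_ext_minus_linear:
  fixes q :: "'a::real_normed_vector \<Rightarrow>\<^sub>L real"
  assumes "proper_ext J" "convex_ext J" "abs_one_homogeneous J"
  shows "sublinear_ext (\<lambda>x. J x - ereal (q x))"
  unfolding sublinear_ext_def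
proof (intro conjI allI impI)
  fix x y
  show "J (x + y) - ereal (q (x + y)) \<le> J x - ereal (q x) + (J y - ereal (q y))"
    using convex_one_homogeneous_subadditive[OF assms, of x y] assms(1)
    unfolding proper_ext_def
    by (cases "J x"; cases "J y"; cases "J (x + y)") (auto simp: blinfun.add_right)
next
  fix c :: real and x assume "0 \<le> c"
  then show "J (c *\<^sub>R x) - ereal (q (c *\<^sub>R x)) = ereal c * (J x - ereal (q x))"
    using assms(1,3) abs_one_homogeneous_zero[OF assms(3)]
    unfolding proper_ext_def abs_one_homogeneous_def
    by (cases "J x"; cases "c = 0")
       (auto simp: blinfun.scaleR_right algebra_simps zero_ereal_def)
qed

text \<open>Testing the subgradient inequality at \<open>0\<close> and at \<open>2v\<close> gives \<open>\<langle>p, v\<rangle> = J(v)\<close>.\<close>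

lemma subdiff_one_homogeneous:
  assumes "proper_ext J" "abs_one_homogeneous J" "p \<in> subdiff J v"
  shows "J v = ereal (p v)" and "ereal (p u) \<le> J u"
proof -
  from assms(3) have sub: "J v + ereal (p (w - v)) \<le> J w" for w
    by (simp add: subdiff_def)
  obtain j where j: "J v = ereal j"
    using assms(1,3) by (cases "J v") (auto simp: proper_ext_def subdiff_def)
  have "j - p v \<le> 0"
    using sub[of 0] j abs_one_homogeneous_zero[OF assms(2)] by (simp add: blinfun.minus_right)
  moreover have "J (2 *\<^sub>R v) = ereal (2 * j)"
    using assms(2) j by (simp add: abs_one_homogeneous_def)
  then have "j + p v \<le> 2 * j"
    using sub[of "2 *\<^sub>R v"] j by (simp add: scaleR_2)
  ultimately have "p v = j" by simp
  with j show "J v = ereal (p v)" by simp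
  show "ereal (p u) \<le> J u"
    using sub[of u] j \<open>p v = j\<close> by (simp add: blinfun.diff_right)
qed

lemma bregman_calibrated:
  fixes q :: "'a::real_normed_vector \<Rightarrow>\<^sub>L real"
  shows "J w = ereal (q w) \<Longrightarrow> bregman J q u w = J u - ereal (q u)"
  by (cases "J u") (simp_all add: bregman_def blinfun.diff_right)

theorem theorem4:
  fixes J :: "'a::banach \<Rightarrow> ereal" and v :: 'a and p :: "'a \<Rightarrow>\<^sub>L real"
  assumes "proper_ext J" and "convex_ext J" and "abs_one_homogeneous J"
    and "p \<in> subdiff J v"
  shows "{u. infconv (\<lambda>x. bregman J p x v) (\<lambda>x. bregman J (-p) x (-v)) u = 0} \<noteq> {}
     \<and> subspace {u. infconv (\<lambda>x. bregman J p x v) (\<lambda>x. bregman J (-p) x (-v)) u = 0}"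
proof -
  note calibrated = subdiff_one_homogeneous[OF assms(1,3,4)]
  define F where "F x = J x - ereal (p x)" for x
  define G where "G x = J x - ereal ((- p) x)" for x
  have bregman_F: "(\<lambda>x. bregman J p x v) = F"
    using calibrated(1) by (simp add: fun_eq_iff F_def bregman_calibrated)
  have bregman_G: "(\<lambda>x. bregman J (-p) x (-v)) = G"
    using calibrated(1) abs_one_homogeneous_uminus[OF assms(3), of v]
    by (simp add: fun_eq_iff G_def bregman_calibrated blinfun.minus_right uminus_blinfun.rep_eq)
  have G_mirror: "G x = F (- x)" for x
    by (simp add: F_def G_def abs_one_homogeneous_uminus[OF assms(3)]
        blinfun.minus_right uminus_blinfun.rep_eq)
  have F_nonneg: "0 \<le> F x" for x
    using calibrated(2)[of x] by (cases "J x") (simp_all add: F_def)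
  have G_nonneg: "0 \<le> G x" for x
    using F_nonneg G_mirror by simp
  have sublinear: "sublinear_ext F" "sublinear_ext G"
    unfolding F_def G_def using sublinear_ext_minus_linear[OF assms(1-3)] by blast+
  have "subspace {u. infconv F G u = 0}"
    by (rule sublinear_ext_zero_set_subspace
        [OF sublinear_ext_infconv[OF sublinear F_nonneg G_nonneg]
          infconv_nonneg[OF F_nonneg G_nonneg] infconv_even[where F = F and G = G, OF G_mirror]])
  then show ?thesis
    unfolding bregman_F bregman_G by (auto simp: subspace_def)
qed

end
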